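(* Let $H$ be a digraph with at least two vertices and $r\in V(H)$ such that every vertex of $H$ is reachable from $r$, and let $(\hat T,\{B_x\}_{x\in V(\hat T)})$ be the $r$-rooted cut decomposition of $H$. Let $R$ be the set of arcs $uv\in A(H)$ such that $v\in V(\hat T)$ and $u\in B_x$ for some node $x$ of the subtree $\hat T_v$ (i.e. $v$ is an ancestor of $x$ or $v=x$). Then every out-tree $T$ in $H$ rooted at $r$ satisfies $A(T)\cap R=\emptyset$.
   Context: Digraphs are finite and without loops; paths are directed. An out-tree is an oriented tree with exactly one vertex of in-degree zero (its root). A vertex $v$ is bi-reachable from $r$ if there are two internally vertex-disjoint directed paths from $r$ to $v$. For a digraph $H$ with at least two vertices and $r\in V(H)$ such that every vertex of $H$ is reachable from $r$, the diblock $B_r$ of $r$ in $H$ is the set of all vertices bi-reachable from $r$, together with $r$ and all out-neighbours of $r$. For $x\in B_r\setminus\{r\}$ let $X_x$ be the set of vertices $v\in V(H)\setminus B_r$ such that every directed $r$–$v$ path intersects $B_r$ for the last time in $x$; $x$ is a bottleneck of $B_r$ if $X_x\ne\emptyset$ (the sets $X_x$ partition $V(H)\setminus B_r$). The $r$-rooted cut decomposition $(\hat T,\{B_x\}_{x\in V(\hat T)})$ of $H$ is defined recursively: $\hat T$ is a rooted tree with root $r$ and $V(\hat T)\subseteq V(H)$; the set associated with the root is $B_r$; the children of $r$ are the bottlenecks of $B_r$; and for each bottleneck $x$, the subtree of $\hat T$ rooted at $x$ together with its associated sets is the $x$-rooted cut decomposition of the induced subgraph $H[X_x\cup\{x\}]$.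 For a node $x$, $\hat T_x$ is the subtree of $\hat T$ rooted at $x$. *)

theory Defs
  imports Main
begin

definition is_dpath :: "'a set \<Rightarrow> ('a \<times> 'a) set \<Rightarrow> 'a list \<Rightarrow> bool" where
  "is_dpath V A p \<longleftrightarrow> p \<noteq> [] \<and> distinct p \<and> set p \<subseteq> V \<and>
     (\<forall>i. Suc i < length p \<longrightarrow> (p ! i, p ! Suc i) \<in> A)"

definition dpath_from :: "'a set \<Rightarrow> ('a \<times> 'a) set \<Rightarrow> 'a \<Rightarrow> 'a \<Rightarrow> 'a list \<Rightarrow> bool" where
  "dpath_from V A u v p \<longleftrightarrow> is_dpath V A p \<and> hd p = u \<and> last p = v"

definition internal_verts :: "'a list \<Rightarrow> 'a set" where
  "internal_verts p = set (butlast (tl p))"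

definition bireachable :: "'a set \<Rightarrow> ('a \<times> 'a) set \<Rightarrow> 'a \<Rightarrow> 'a \<Rightarrow> bool" where
  "bireachable V A r v \<longleftrightarrow> (\<exists>p q. dpath_from V A r v p \<and> dpath_from V A r v q \<and>
      internal_verts p \<inter> internal_verts q = {})"

definition diblock :: "'a set \<Rightarrow> ('a \<times> 'a) set \<Rightarrow> 'a \<Rightarrow> 'a set" where
  "diblock V A r = {v \<in> V. bireachable V A r v} \<union> {r} \<union> {v \<in> V. (r, v) \<in> A}"

definition Xset :: "'a set \<Rightarrow> ('a \<times> 'a) set \<Rightarrow> 'a \<Rightarrow> 'a \<Rightarrow> 'a set" where
  "Xset V A r x = {v \<in> V - diblock V A r. (\<exists>p. dpath_from V A r v p) \<and>
      (\<forall>p. dpath_from V A r v p \<longrightarrow> last (filter (\<lambda>w. w \<in> diblock V A r) p) = x)}"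

definition bottleneck :: "'a set \<Rightarrow> ('a \<times> 'a) set \<Rightarrow> 'a \<Rightarrow> 'a \<Rightarrow> bool" where
  "bottleneck V A r x \<longleftrightarrow> x \<in> diblock V A r - {r} \<and> Xset V A r x \<noteq> {}"

definition induced_arcs :: "('a \<times> 'a) set \<Rightarrow> 'a set \<Rightarrow> ('a \<times> 'a) set" where
  "induced_arcs A W = A \<inter> (W \<times> W)"

text \<open>Nodes of the r-rooted cut decomposition of (V,A): cd_node V A r x W means that x is a
  node of the decomposition tree and the subtree rooted at x is the x-rooted cut decomposition
  of the induced subdigraph on W (so W = V for the root, W = X_x \<union> {x} for a child x).
  The set associated with node x is diblock W (induced_arcs A W) x.\<close>
inductive cd_node :: "'a set \<Rightarrow> ('a \<times> 'a) set \<Rightarrow> 'a \<Rightarrow> 'a \<Rightarrow> 'a set \<Rightarrow> bool"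
  for V A r where
  cd_root: "cd_node V A r r V"
| cd_child: "cd_node V A r x W \<Longrightarrow> bottleneck W (induced_arcs A W) x y \<Longrightarrow>
     cd_node V A r y (Xset W (induced_arcs A W) x y \<union> {y})"

definition R_arcs :: "'a set \<Rightarrow> ('a \<times> 'a) set \<Rightarrow> 'a \<Rightarrow> ('a \<times> 'a) set" where
  "R_arcs V A r = {(u, v) \<in> A. \<exists>Wv. cd_node V A r v Wv \<and>
      (\<exists>x Wx. cd_node Wv (induced_arcs A Wv) v x Wx \<and>
              u \<in> diblock Wx (induced_arcs A Wx) x)}"

definition digraph :: "'a set \<Rightarrow> ('a \<times> 'a) set \<Rightarrow> bool" where
  "digraph V A \<longleftrightarrow> finite V \<and> A \<subseteq> V \<times> V \<and> (\<forall>v. (v, v) \<notin> A)"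

text \<open>Out-tree (VT,AT) rooted at r: an oriented tree (underlying undirected multigraph is a
  tree: connected with |AT| = |VT| - 1) with exactly one vertex of in-degree zero, namely r.\<close>
definition out_tree :: "'a set \<Rightarrow> ('a \<times> 'a) set \<Rightarrow> 'a \<Rightarrow> bool" where
  "out_tree VT AT r \<longleftrightarrow> finite VT \<and> AT \<subseteq> VT \<times> VT \<and> r \<in> VT \<and>
     (\<forall>v\<in>VT. (r, v) \<in> (AT \<union> AT\<inverse>)\<^sup>*) \<and> card AT + 1 = card VT \<and>
     {v \<in> VT. \<not> (\<exists>u. (u, v) \<in> AT)} = {r}"

end

theory Submission
  imports Defs
begin

(*
  By induction along the cut decomposition, every r-u path that ends in the vertex set W
  attached to a node x passes through x and stays in W afterwards. For a child y of x and
  u in X_y, the last vertex of the path in the diblock B_x is y, and every later vertex w lies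
  in X_y: an x-w path whose last B_x-vertex a differs from y would give an x-u walk avoiding y
  (a is reachable from x avoiding y, by bi-reachability), which u in X_y forbids.
  If uv is an arc of R, then u lies in the set attached to v, so the tree path from r to u
  passes through v; the tree arc entering v comes from the vertex before v on that path,
  which is not u, contradicting that every non-root vertex of an out-tree has a unique parent.
*)

lemma is_dpath_append_right: "is_dpath V A (xs @ ys) \<Longrightarrow> ys \<noteq> [] \<Longrightarrow> is_dpath V A ys"
proof -
  assume h: "is_dpath V A (xs @ ys)" and ne: "ys \<noteq> []"
  have "(ys ! i, ys ! Suc i) \<in> A" if i: "Suc i < length ys" for i
  proof -
    have "Suc (length xs + i) < length (xs @ ys)" using i by simp
    then have "((xs @ ys) ! (length xs + i), (xs @ ys) ! Suc (length xs + i)) \<in> A"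
      using h unfolding is_dpath_def by blast
    then show ?thesis by (metis add_Suc_right nth_append_length_plus)
  qed
  then show ?thesis using h ne unfolding is_dpath_def by auto
qed

lemma is_dpath_append_left: "is_dpath V A (xs @ ys) \<Longrightarrow> xs \<noteq> [] \<Longrightarrow> is_dpath V A xs"
proof -
  assume h: "is_dpath V A (xs @ ys)" and ne: "xs \<noteq> []"
  have "(xs ! i, xs ! Suc i) \<in> A" if i: "Suc i < length xs" for i
  proof -
    have "Suc i < length (xs @ ys)" using i by simp
    then have "((xs @ ys) ! i, (xs @ ys) ! Suc i) \<in> A" using h unfolding is_dpath_def by blast
    then show ?thesis using i by (simp add: nth_append)
  qed
  then show ?thesis using h ne unfolding is_dpath_def by auto
qed

lemma is_dpath_snoc:
  assumes p: "is_dpath V A p" and t: "t \<in> V" "t \<notin> set p" "(last p, t) \<in> A"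
  shows "is_dpath V A (p @ [t])"
proof -
  have "((p @ [t]) ! i, (p @ [t]) ! Suc i) \<in> A" if i: "Suc i < length (p @ [t])" for i
  proof (cases "Suc i < length p")
    case True
    then show ?thesis using p unfolding is_dpath_def by (simp add: nth_append)
  next
    case False
    then have "i = length p - 1" using i by simp
    then show ?thesis using p t(3) unfolding is_dpath_def by (simp add: nth_append last_conv_nth)
  qed
  then show ?thesis using p t(1,2) unfolding is_dpath_def by auto
qed

lemma is_dpath_arc: "is_dpath V A (xs @ a # b # ys) \<Longrightarrow> (a, b) \<in> A"
proof -
  assume h: "is_dpath V A (xs @ a # b # ys)"
  have "Suc (length xs) < length (xs @ a # b # ys)" by simp
  then have "((xs @ a # b # ys) ! length xs, (xs @ a # b # ys) ! Suc (length xs)) \<in> A"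
    using h unfolding is_dpath_def by blast
  moreover have "(xs @ a # b # ys) ! Suc (length xs) = b"
    by (metis add_Suc_right add_0_right nth_Cons_0 nth_Cons_Suc nth_append_length_plus)
  ultimately show ?thesis by simp
qed

lemma is_dpath_mono: "is_dpath V A p \<Longrightarrow> V \<subseteq> V' \<Longrightarrow> A \<subseteq> A' \<Longrightarrow> is_dpath V' A' p"
  unfolding is_dpath_def by blast

lemma is_dpath_induced: "is_dpath V A p \<Longrightarrow> set p \<subseteq> W \<Longrightarrow> is_dpath W (induced_arcs A W) p"
  unfolding is_dpath_def induced_arcs_def
  by (metis IntI Suc_lessD mem_Sigma_iff nth_mem subset_code(1))

lemma is_dpath_rtrancl_induced:
  "is_dpath V A p \<Longrightarrow> set p \<subseteq> S \<Longrightarrow> (hd p, last p) \<in> (induced_arcs A S)\<^sup>*"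
proof (induction p)
  case Nil
  then show ?case by (simp add: is_dpath_def)
next
  case (Cons a p)
  show ?case
  proof (cases "p = []")
    case True
    then show ?thesis by simp
  next
    case False
    have "is_dpath V A p" using is_dpath_append_right[of V A "[a]" p] Cons.prems(1) False by simp
    then have "(hd p, last p) \<in> (induced_arcs A S)\<^sup>*" using Cons by simp
    moreover have "(a, hd p) \<in> A"
      using is_dpath_arc[of V A "[]" a "hd p" "tl p"] Cons.prems(1) False by simp
    then have "(a, hd p) \<in> induced_arcs A S"
      using Cons.prems(2) False unfolding induced_arcs_def by auto
    ultimately show ?thesis using False by (simp add: converse_rtrancl_into_rtrancl)
  qed
qed

lemma rtrancl_induced_imp_dpath:
  assumes "(s, t) \<in> (induced_arcs A S)\<^sup>*" and "A \<subseteq> V \<times> V" and "s \<in> V" and "s \<in> S"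
  shows "\<exists>p. dpath_from V A s t p \<and> set p \<subseteq> S"
  using assms(1)
proof (induction t rule: rtrancl_induct)
  case base
  then show ?case using assms by (intro exI[of _ "[s]"]) (auto simp: dpath_from_def is_dpath_def)
next
  case (step m t)
  then obtain p where p: "dpath_from V A s m p" "set p \<subseteq> S" by auto
  have t: "(m, t) \<in> A" "t \<in> S" "t \<in> V" using step.hyps(2) assms(2) unfolding induced_arcs_def by auto
  show ?case
  proof (cases "t \<in> set p")
    case True
    then obtain p1 p2 where pp: "p = p1 @ t # p2" by (meson split_list)
    then have "is_dpath V A (p1 @ [t])"
      using p(1) is_dpath_append_left[of V A "p1 @ [t]" p2] by (simp add: dpath_from_def)
    moreover have "hd (p1 @ [t]) = s" using p(1) pp by (cases p1) (auto simp: dpath_from_def)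
    ultimately show ?thesis using p pp by (intro exI[of _ "p1 @ [t]"]) (auto simp: dpath_from_def)
  next
    case False
    then have "is_dpath V A (p @ [t])"
      using is_dpath_snoc[of V A p t] p t unfolding dpath_from_def by simp
    moreover have "hd (p @ [t]) = s" using p(1) by (auto simp: dpath_from_def is_dpath_def)
    ultimately show ?thesis using p t by (intro exI[of _ "p @ [t]"]) (auto simp: dpath_from_def)
  qed
qed

lemma set_subset_internal_verts: "p \<noteq> [] \<Longrightarrow> set p \<subseteq> {hd p, last p} \<union> internal_verts p"
  unfolding internal_verts_def
  by (cases p; cases "tl p" rule: rev_cases) auto

lemma last_filter_split:
  "filter P xs \<noteq> [] \<Longrightarrow> \<exists>ys zs. xs = ys @ last (filter P xs) # zs \<and> filter P zs = []"
proof (induction xs rule: rev_induct)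
  case Nil
  then show ?case by simp
next
  case (snoc x xs)
  show ?case
  proof (cases "P x")
    case True
    then show ?thesis by (intro exI[of _ xs] exI[of _ "[]"]) simp
  next
    case False
    with snoc obtain ys zs where "xs = ys @ last (filter P xs) # zs" "filter P zs = []" by auto
    then show ?thesis using False by (intro exI[of _ ys] exI[of _ "zs @ [x]"]) auto
  qed
qed

lemma diblock_subset: "r \<in> V \<Longrightarrow> diblock V A r \<subseteq> V"
  unfolding diblock_def by blast

lemma diblock_reachable_avoiding:
  assumes "a \<in> diblock V A x" and "y \<noteq> x" and "y \<noteq> a"
  shows "(x, a) \<in> (induced_arcs A (- {y}))\<^sup>*"
proof -
  consider "a = x" | "(x, a) \<in> A" | "bireachable V A x a"
    using assms(1) unfolding diblock_def by blast
  then show ?thesis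
  proof cases
    case 2
    then show ?thesis using assms(2,3) unfolding induced_arcs_def by auto
  next
    case 3
    then obtain p q where pq: "dpath_from V A x a p" "dpath_from V A x a q"
      "internal_verts p \<inter> internal_verts q = {}"
      unfolding bireachable_def by blast
    then obtain p' where p': "dpath_from V A x a p'" "y \<notin> internal_verts p'" by blast
    then have "y \<notin> set p'"
      using set_subset_internal_verts[of p'] assms(2,3) unfolding dpath_from_def is_dpath_def by auto
    then show ?thesis
      using is_dpath_rtrancl_induced[of V A p' "- {y}"] p'(1) unfolding dpath_from_def by auto
  qed simp
qed

lemma dpath_from_meets_diblock:
  assumes "dpath_from V A x w P"
  shows "filter (\<lambda>v. v \<in> diblock V A x) P \<noteq> []"
proof -
  have "x \<in> set P" using assms hd_in_set unfolding dpath_from_def is_dpath_def by metis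
  moreover have "x \<in> diblock V A x" unfolding diblock_def by blast
  ultimately show ?thesis by (auto simp: filter_empty_conv)
qed

lemma reachable_avoiding_if_last_diblock_vertex_ne:
  assumes P: "dpath_from W E x w P"
    and y: "y \<in> diblock W E x" "y \<noteq> x"
    and last_ne: "last (filter (\<lambda>v. v \<in> diblock W E x) P) \<noteq> y"
  shows "(x, w) \<in> (induced_arcs E (- {y}))\<^sup>*"
proof -
  let ?B = "diblock W E x"
  define a where "a = last (filter (\<lambda>v. v \<in> ?B) P)"
  have ne: "filter (\<lambda>v. v \<in> ?B) P \<noteq> []" using P by (rule dpath_from_meets_diblock)
  then obtain P1 P2 where P12: "P = P1 @ a # P2" and P2: "filter (\<lambda>v. v \<in> ?B) P2 = []"
    unfolding a_def by (metis last_filter_split)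
  have "a \<in> set (filter (\<lambda>v. v \<in> ?B) P)" using ne unfolding a_def by (rule last_in_set)
  then have "a \<in> ?B" by simp
  moreover have "y \<noteq> a" using last_ne unfolding a_def by simp
  ultimately have xa: "(x, a) \<in> (induced_arcs E (- {y}))\<^sup>*"
    by (rule diblock_reachable_avoiding[OF _ y(2)])
  have "is_dpath W E (a # P2)"
    using P P12 is_dpath_append_right[of W E P1 "a # P2"] unfolding dpath_from_def by simp
  moreover have "set (a # P2) \<subseteq> - {y}"
    using P2 y(1) \<open>y \<noteq> a\<close> by (auto simp: filter_empty_conv)
  ultimately have "(hd (a # P2), last (a # P2)) \<in> (induced_arcs E (- {y}))\<^sup>*"
    by (rule is_dpath_rtrancl_induced)
  moreover have "last (a # P2) = w" using P P12 unfolding dpath_from_def by simp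
  ultimately show ?thesis using xa by simp
qed

lemma Xset_closed_under_reachable_avoiding:
  assumes E: "E \<subseteq> W \<times> W" and x: "x \<in> W"
    and y: "y \<in> diblock W E x" "y \<noteq> x"
    and u: "u \<in> Xset W E x y"
    and w: "w \<in> W - diblock W E x" "dpath_from W E x w P"
    and wu: "(w, u) \<in> (induced_arcs E (- {y}))\<^sup>*"
  shows "w \<in> Xset W E x y"
proof -
  have "last (filter (\<lambda>v. v \<in> diblock W E x) P') = y" if P': "dpath_from W E x w P'" for P'
  proof (rule ccontr)
    assume "last (filter (\<lambda>v. v \<in> diblock W E x) P') \<noteq> y"
    then have "(x, u) \<in> (induced_arcs E (- {y}))\<^sup>*"
      using reachable_avoiding_if_last_diblock_vertex_ne[OF P' y] wu by simp
    then obtain Q where Q: "dpath_from W E x u Q" "set Q \<subseteq> - {y}"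
      using rtrancl_induced_imp_dpath[OF _ E x] y(2) by blast
    have "filter (\<lambda>v. v \<in> diblock W E x) Q \<noteq> []" using Q(1) by (rule dpath_from_meets_diblock)
    moreover have "last (filter (\<lambda>v. v \<in> diblock W E x) Q) = y"
      using u Q(1) unfolding Xset_def by blast
    ultimately have "y \<in> set (filter (\<lambda>v. v \<in> diblock W E x) Q)" by (metis last_in_set)
    then have "y \<in> set Q" by simp
    with Q(2) show False by blast
  qed
  then show ?thesis using w unfolding Xset_def by blast
qed

lemma dpath_to_Xset_through_bottleneck:
  assumes E: "E \<subseteq> W \<times> W"
    and y: "y \<in> diblock W E x" "y \<noteq> x"
    and q: "dpath_from W E x u q" and u: "u \<in> Xset W E x y"
  shows "\<exists>q1 q2. q = q1 @ y # q2 \<and> set q2 \<subseteq> Xset W E x y"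
proof -
  let ?B = "diblock W E x"
  have qdp: "is_dpath W E q" and hq: "hd q = x" and lq: "last q = u"
    using q unfolding dpath_from_def by auto
  have x: "x \<in> W" using qdp hq hd_in_set unfolding is_dpath_def by blast
  have last_y: "last (filter (\<lambda>v. v \<in> ?B) q) = y" using u q unfolding Xset_def by blast
  obtain q1 q2 where qq: "q = q1 @ y # q2" and q2: "filter (\<lambda>v. v \<in> ?B) q2 = []"
    using last_filter_split[OF dpath_from_meets_diblock[OF q]] unfolding last_y by blast
  have q2B: "set q2 \<inter> ?B = {}" using q2 by (auto simp: filter_empty_conv)
  have "w \<in> Xset W E x y" if w: "w \<in> set q2" for w
  proof -
    obtain q3 q4 where q34: "q2 = q3 @ w # q4" using w by (meson split_list)
    have "set q \<subseteq> W" using qdp unfolding is_dpath_def by blast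
    then have "w \<in> W - ?B" using w q2B unfolding qq by auto
    moreover have "dpath_from W E x w (q1 @ y # q3 @ [w])"
    proof -
      have "q = (q1 @ y # q3 @ [w]) @ q4" unfolding qq q34 by simp
      then have "is_dpath W E (q1 @ y # q3 @ [w])"
        using qdp is_dpath_append_left[of W E "q1 @ y # q3 @ [w]" q4] by simp
      moreover have "hd (q1 @ y # q3 @ [w]) = x" using hq unfolding qq by (cases q1) auto
      ultimately show ?thesis unfolding dpath_from_def by simp
    qed
    moreover have "(w, u) \<in> (induced_arcs E (- {y}))\<^sup>*"
    proof -
      have "is_dpath W E (w # q4)"
        using qdp is_dpath_append_right[of W E "q1 @ y # q3" "w # q4"] unfolding qq q34 by simp
      moreover have "set (w # q4) \<subseteq> - {y}" using q2B y(1) unfolding q34 by auto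
      ultimately have "(hd (w # q4), last (w # q4)) \<in> (induced_arcs E (- {y}))\<^sup>*"
        by (rule is_dpath_rtrancl_induced)
      then show ?thesis using lq unfolding qq q34 by simp
    qed
    ultimately show ?thesis using Xset_closed_under_reachable_avoiding[OF E x y u] by blast
  qed
  with qq show ?thesis by blast
qed

lemma cd_node_subset: "cd_node V A r x W \<Longrightarrow> r \<in> V \<Longrightarrow> x \<in> W \<and> W \<subseteq> V"
proof (induction rule: cd_node.induct)
  case cd_root
  then show ?case by simp
next
  case (cd_child x W y)
  then have "x \<in> W" "W \<subseteq> V" by simp_all
  moreover have "y \<in> diblock W (induced_arcs A W) x" using cd_child.hyps(2) unfolding bottleneck_def by simp
  ultimately have "y \<in> W" using diblock_subset by (metis subsetD)
  moreover have "Xset W (induced_arcs A W) x y \<subseteq> W" unfolding Xset_def by blast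
  ultimately show ?case using \<open>W \<subseteq> V\<close> by blast
qed

definition enters_through :: "'a set \<Rightarrow> ('a \<times> 'a) set \<Rightarrow> 'a \<Rightarrow> 'a \<Rightarrow> 'a set \<Rightarrow> bool" where
  "enters_through V A r x W \<longleftrightarrow> (\<forall>p u. dpath_from V A r u p \<longrightarrow> u \<in> W \<longrightarrow>
      (\<exists>p1 p2. p = p1 @ x # p2 \<and> set (x # p2) \<subseteq> W))"

lemma enters_through_child:
  assumes parent: "enters_through V A r x W"
    and y: "bottleneck W (induced_arcs A W) x y"
  shows "enters_through V A r y (Xset W (induced_arcs A W) x y \<union> {y})"
  unfolding enters_through_def
proof (intro allI impI)
  fix p u
  assume p: "dpath_from V A r u p" and u: "u \<in> Xset W (induced_arcs A W) x y \<union> {y}"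
  let ?E = "induced_arcs A W"
  have yB: "y \<in> diblock W ?E x" "y \<noteq> x" using y unfolding bottleneck_def by auto
  then have "y \<in> W" unfolding diblock_def by blast
  then have "u \<in> W" using u unfolding Xset_def by blast
  then obtain p1 p2 where pp: "p = p1 @ x # p2" and p2W: "set (x # p2) \<subseteq> W"
    using parent p unfolding enters_through_def by blast
  show "\<exists>p1 p2. p = p1 @ y # p2 \<and> set (y # p2) \<subseteq> Xset W ?E x y \<union> {y}"
  proof (cases "u = y")
    case True
    have "p = butlast p @ [y]" using p True unfolding dpath_from_def is_dpath_def
      by (metis append_butlast_last_id)
    then show ?thesis by (intro exI[of _ "butlast p"] exI[of _ "[]"]) simp
  next
    case False
    have "is_dpath V A (x # p2)"
      using p is_dpath_append_right[of V A p1 "x # p2"] unfolding pp dpath_from_def by simp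
    then have "is_dpath W ?E (x # p2)" using p2W by (rule is_dpath_induced)
    then have "dpath_from W ?E x u (x # p2)" using p unfolding pp dpath_from_def by simp
    then obtain q1 q2 where "x # p2 = q1 @ y # q2" "set q2 \<subseteq> Xset W ?E x y"
      using dpath_to_Xset_through_bottleneck[of ?E W y x u] yB u False
      unfolding induced_arcs_def by blast
    then show ?thesis unfolding pp by (intro exI[of _ "p1 @ q1"] exI[of _ q2]) auto
  qed
qed

lemma cd_node_enters_through: "cd_node V A r x W \<Longrightarrow> enters_through V A r x W"
proof (induction rule: cd_node.induct)
  case cd_root
  show ?case unfolding enters_through_def dpath_from_def is_dpath_def
    by (metis append_Nil list.collapse)
next
  case (cd_child x W y)
  show ?case by (rule enters_through_child[OF cd_child.IH cd_child.hyps(2)])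
qed

lemma R_arcs_tail_in_node_set:
  assumes "(u, v) \<in> R_arcs V A r" and "r \<in> V"
  shows "\<exists>W. cd_node V A r v W \<and> u \<in> W"
proof -
  obtain Wv x Wx where v: "cd_node V A r v Wv" and x: "cd_node Wv (induced_arcs A Wv) v x Wx"
    and u: "u \<in> diblock Wx (induced_arcs A Wx) x"
    using assms(1) unfolding R_arcs_def by blast
  have "v \<in> Wv" using cd_node_subset[OF v assms(2)] by blast
  then have "x \<in> Wx" "Wx \<subseteq> Wv" using cd_node_subset[OF x] by blast+
  then have "u \<in> Wv" using u diblock_subset[of x Wx] by blast
  with v show ?thesis by blast
qed

lemma sum_eq_card_imp_eq_1:
  fixes f :: "'a \<Rightarrow> nat"
  assumes "finite S" and "\<forall>x\<in>S. f x \<ge> 1" and "sum f S = card S" and "x \<in> S"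
  shows "f x = 1"
proof (rule ccontr)
  assume "f x \<noteq> 1"
  then have "sum (\<lambda>_. 1) S < sum f S"
    using assms by (intro sum_strict_mono_ex1) force+
  then show False using assms(3) by simp
qed

lemma out_tree_unique_parent:
  assumes ot: "out_tree VT AT r" and v: "v \<in> VT" "v \<noteq> r" and arcs: "(a, v) \<in> AT" "(b, v) \<in> AT"
  shows "a = b"
proof -
  define into where "into w = {e \<in> AT. snd e = w}" for w
  have fin: "finite VT" and sub: "AT \<subseteq> VT \<times> VT" and cnt: "card AT + 1 = card VT"
    and sources: "{v \<in> VT. \<not> (\<exists>u. (u, v) \<in> AT)} = {r}" and rV: "r \<in> VT"
    using ot unfolding out_tree_def by auto
  have finA: "finite AT" using fin sub by (meson finite_SigmaI rev_finite_subset)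
  have AT: "AT = (\<Union>w\<in>VT. into w)" using sub unfolding into_def by auto
  have "card AT = (\<Sum>w\<in>VT. card (into w))"
    unfolding AT using fin finA by (intro card_UN_disjoint) (auto simp: into_def)
  moreover have "into r = {}" using sources unfolding into_def by auto
  ultimately have sum_eq: "(\<Sum>w\<in>VT-{r}. card (into w)) = card (VT - {r})"
    using fin rV cnt by (simp add: sum.remove)
  have ge_1: "\<forall>w\<in>VT-{r}. card (into w) \<ge> 1"
  proof
    fix w assume "w \<in> VT - {r}"
    then obtain u where "(u, w) \<in> AT" using sources by auto
    then have "into w \<noteq> {}" "finite (into w)" using finA unfolding into_def by auto
    then show "card (into w) \<ge> 1" by (simp add: Suc_le_eq card_gt_0_iff)
  qed
  have "v \<in> VT - {r}" using v by blast
  with fin ge_1 sum_eq have "card (into v) = 1" by (intro sum_eq_card_imp_eq_1) auto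
  moreover have "(a, v) \<in> into v" "(b, v) \<in> into v" using arcs unfolding into_def by auto
  ultimately show ?thesis by (metis card_1_singletonE prod.inject singletonD)
qed

lemma out_tree_reachable_from_root:
  assumes ot: "out_tree VT AT r" and v: "v \<in> VT"
  shows "(r, v) \<in> AT\<^sup>*"
proof -
  have sub: "AT \<subseteq> VT \<times> VT" and sources: "{v \<in> VT. \<not> (\<exists>u. (u, v) \<in> AT)} = {r}"
    and conn: "(r, v) \<in> (AT \<union> AT\<inverse>)\<^sup>*"
    using ot v unfolding out_tree_def by auto
  from conn show ?thesis
  proof (induction v rule: rtrancl_induct)
    case (step w w')
    show ?case
    proof (cases "(w, w') \<in> AT")
      case True
      then show ?thesis using step.IH by simp
    next
      case False
      then have ww': "(w', w) \<in> AT" using step.hyps(2) by auto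
      then have w: "w \<in> VT" "w \<noteq> r" using sub sources by auto
      then obtain m where m: "(r, m) \<in> AT\<^sup>*" "(m, w) \<in> AT" using step.IH by (metis rtranclE)
      \<comment> \<open>going back along an arc always leads to the unique parent\<close>
      have "m = w'" using out_tree_unique_parent[OF ot w m(2) ww'] .
      then show ?thesis using m by simp
    qed
  qed simp
qed

lemma out_tree_path_avoids_out_neighbour:
  assumes ot: "out_tree VT AT r" and p: "dpath_from VT AT r u p" and uv: "(u, v) \<in> AT"
  shows "v \<notin> set p"
proof
  assume "v \<in> set p"
  then obtain p1 p2 where pp: "p = p1 @ v # p2" by (meson split_list)
  have "r \<in> {w \<in> VT. \<not> (\<exists>u. (u, w) \<in> AT)}" and sub: "AT \<subseteq> VT \<times> VT"
    using ot unfolding out_tree_def by auto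
  then have vr: "v \<noteq> r" and vVT: "v \<in> VT" using uv by auto
  then have p1: "p1 \<noteq> []" using p pp unfolding dpath_from_def by auto
  then have "p = butlast p1 @ last p1 # v # p2" using pp by simp
  then have "is_dpath VT AT (butlast p1 @ last p1 # v # p2)" using p unfolding dpath_from_def by simp
  then have "(last p1, v) \<in> AT" by (rule is_dpath_arc)
  then have "last p1 = u" using out_tree_unique_parent[OF ot vVT vr _ uv] by blast
  moreover have "last p1 \<noteq> last p"
    using p last_in_set[OF p1] unfolding pp dpath_from_def is_dpath_def
    by (auto split: if_split_asm dest: last_in_set)
  ultimately show False using p unfolding dpath_from_def by simp
qed

theorem corollary1:
  fixes V :: "'a set" and A :: "('a \<times> 'a) set" and r :: 'a
  assumes "digraph V A"
    and "card V \<ge> 2"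
    and "r \<in> V"
    and "\<forall>v\<in>V. (r, v) \<in> A\<^sup>*"
  shows "\<forall>VT AT. VT \<subseteq> V \<and> AT \<subseteq> A \<and> out_tree VT AT r \<longrightarrow> AT \<inter> R_arcs V A r = {}"
proof (intro allI impI equals0I)
  \<comment> \<open>of the hypotheses on H only \<open>r \<in> V\<close> is needed\<close>
  fix VT AT e
  assume "VT \<subseteq> V \<and> AT \<subseteq> A \<and> out_tree VT AT r" and e: "e \<in> AT \<inter> R_arcs V A r"
  then have VT: "VT \<subseteq> V" and AT: "AT \<subseteq> A" and ot: "out_tree VT AT r"
    and sub: "AT \<subseteq> VT \<times> VT" and rVT: "r \<in> VT"
    unfolding out_tree_def by auto
  obtain u v where uv: "(u, v) \<in> AT" "(u, v) \<in> R_arcs V A r" using e by (cases e) auto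
  obtain W where W: "cd_node V A r v W" "u \<in> W"
    using R_arcs_tail_in_node_set[OF uv(2) assms(3)] by blast
  have "u \<in> VT" using uv(1) sub by blast
  then have "(r, u) \<in> (induced_arcs AT UNIV)\<^sup>*"
    using out_tree_reachable_from_root[OF ot] unfolding induced_arcs_def by simp
  then obtain p where p: "dpath_from VT AT r u p"
    using rtrancl_induced_imp_dpath[OF _ sub rVT UNIV_I] by blast
  then have "dpath_from V A r u p"
    using is_dpath_mono[OF _ VT AT] unfolding dpath_from_def by simp
  then obtain p1 p2 where "p = p1 @ v # p2"
    using cd_node_enters_through[OF W(1)] W(2) unfolding enters_through_def by blast
  then have "v \<in> set p" by simp
  with out_tree_path_avoids_out_neighbour[OF ot p uv(1)] show False by blast
qed

end
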